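(* In $Y_R(\mathfrak{so}_3)$, writing $e_{-1,0}(u)=\sum_{r\ge1}e^{(r)}_{-1,0}u^{-r}$, $$e_{-1,1}(u)=[e^{(1)}_{-1,0},e_{-1,0}(u)]-e_{-1,0}(u)^2.$$
   Context: Let $e_{ij}$ ($i,j\in\{-1,0,1\}$) be the matrix units of $\mathrm{End}\,\mathbb{C}^3$, with rows and columns indexed by $-1,0,1$. Let $P=\sum_{i,j}e_{ij}\otimes e_{ji}$, $Q=\sum_{i,j}e_{ij}\otimes e_{-i,-j}$ and $R(u)=1-\frac{P}{u}+\frac{Q}{u-\frac12}$. Let $t$ be the transposition on $\mathrm{End}\,\mathbb{C}^3$ given by $(e_{ij})^t=e_{-j,-i}$. The algebra $Y_R(\mathfrak{so}_3)$ is the unital associative algebra over $\mathbb{C}$ generated by elements $t_{ij}^{(r)}$, $r\ge 1$, $i,j\in\{-1,0,1\}$; put $t_{ij}(u)=\delta_{ij}+\sum_{r\ge1}t^{(r)}_{ij}u^{-r}$, $T(u)=\sum_{i,j}t_{ij}(u)\otimes e_{ij}$, $T^t(u)=\sum_{i,j}t_{ij}(u)\otimes e_{-j,-i}$, $T_1(u)=\sum t_{ij}(u)\otimes e_{ij}\otimes 1$, $T_2(v)=\sum t_{ij}(v)\otimes 1\otimes e_{ij}$. The defining relations are $R(u-v)T_1(u)T_2(v)=T_2(v)T_1(u)R(u-v)$ and $T(u)T^t(u+\frac12)=T^t(u+\frac12)T(u)=1$. The Gauss generators are the unique series $k_i(u)\in 1+u^{-1}Y_R(\mathfrak{so}_3)[[u^{-1}]]$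 ($i=-1,0,1$) and $e_{ij}(u),f_{ji}(u)\in u^{-1}Y_R(\mathfrak{so}_3)[[u^{-1}]]$ ($-1\le i<j\le1$) such that $T(u)=F(u)K(u)E(u)$, where $F(u)$ is the lower unitriangular matrix with below-diagonal entries $F_{0,-1}=f_{0,-1}(u)$, $F_{1,-1}=f_{1,-1}(u)$, $F_{1,0}=f_{1,0}(u)$, $K(u)=\mathrm{diag}(k_{-1}(u),k_0(u),k_1(u))$, and $E(u)$ is the upper unitriangular matrix with above-diagonal entries $E_{-1,0}=e_{-1,0}(u)$, $E_{-1,1}=e_{-1,1}(u)$, $E_{0,1}=e_{01}(u)$ (rows/columns indexed by $-1,0,1$). *)

theory Defs
  imports Main "HOL.Real_Vector_Spaces"
begin

definition idx :: "int set" where "idx = {-1, 0, 1}"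

(* One-variable series in u^{-1}: represented by coefficient function nat => 'a
   (value at n = coefficient of u^{-n}). *)

(* t_{ij}(u) = delta_ij + sum_{r>=1} t_ij^(r) u^{-r}; g i j r is the generator t_ij^(r) (r >= 1) *)
definition tser :: "(int \<Rightarrow> int \<Rightarrow> nat \<Rightarrow> 'a::real_algebra_1) \<Rightarrow> int \<Rightarrow> int \<Rightarrow> nat \<Rightarrow> 'a" where
  "tser g i j r = (if r = 0 then (if i = j then 1 else 0) else g i j r)"

definition cmul :: "(nat \<Rightarrow> 'a::ring_1) \<Rightarrow> (nat \<Rightarrow> 'a) \<Rightarrow> nat \<Rightarrow> 'a" where
  "cmul f h n = (\<Sum>p\<le>n. f p * h (n - p))"

definition one_ser :: "nat \<Rightarrow> 'a::ring_1" where
  "one_ser n = (if n = 0 then 1 else 0)"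

(* f(u + 1/2) re-expanded in u^{-1}, using (u+1/2)^{-r} = sum_k binom(-r,k) (1/2)^k u^{-r-k} *)
definition shift_half :: "(nat \<Rightarrow> 'a::real_algebra_1) \<Rightarrow> nat \<Rightarrow> 'a" where
  "shift_half f n = (if n = 0 then f 0 else
     (\<Sum>r\<in>{1..n}. ((-1) ^ (n - r) * real ((n - 1) choose (n - r)) * (1/2) ^ (n - r)) *\<^sub>R f r))"

(* Two-variable objects: F m n = coefficient of u^m v^n (m, n integers) *)

(* multiplication by w = u - v *)
definition wmul :: "(int \<Rightarrow> int \<Rightarrow> 'a::real_algebra_1) \<Rightarrow> int \<Rightarrow> int \<Rightarrow> 'a" where
  "wmul F = (\<lambda>m n. F (m - 1) n - F m (n - 1))"

definition whmul :: "(int \<Rightarrow> int \<Rightarrow> 'a::real_algebra_1) \<Rightarrow> int \<Rightarrow> int \<Rightarrow> 'a" where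
  "whmul F = (\<lambda>m n. wmul F m n - (1/2) *\<^sub>R F m n)"

(* entry ((a,b),(c,d)) of T_1(u) T_2(v): t_ac(u) t_bd(v) *)
definition XX :: "(int \<Rightarrow> int \<Rightarrow> nat \<Rightarrow> 'a::real_algebra_1) \<Rightarrow> int \<Rightarrow> int \<Rightarrow> int \<Rightarrow> int \<Rightarrow> int \<Rightarrow> int \<Rightarrow> 'a" where
  "XX g a b c d = (\<lambda>m n. if m \<le> 0 \<and> n \<le> 0
       then tser g a c (nat (-m)) * tser g b d (nat (-n)) else 0)"

(* entry ((a,b),(c,d)) of T_2(v) T_1(u): t_bd(v) t_ac(u) *)
definition YY :: "(int \<Rightarrow> int \<Rightarrow> nat \<Rightarrow> 'a::real_algebra_1) \<Rightarrow> int \<Rightarrow> int \<Rightarrow> int \<Rightarrow> int \<Rightarrow> int \<Rightarrow> int \<Rightarrow> 'a" where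
  "YY g a b c d = (\<lambda>m n. if m \<le> 0 \<and> n \<le> 0
       then tser g b d (nat (-n)) * tser g a c (nat (-m)) else 0)"

(* entry ((i,k),(j,l)) of  w(w-1/2) R(w) T_1(u) T_2(v),
   where w(w-1/2) R(w) = w(w-1/2) - (w-1/2) P + w Q *)
definition rtt_lhs :: "(int \<Rightarrow> int \<Rightarrow> nat \<Rightarrow> 'a::real_algebra_1) \<Rightarrow> int \<Rightarrow> int \<Rightarrow> int \<Rightarrow> int \<Rightarrow> int \<Rightarrow> int \<Rightarrow> 'a" where
  "rtt_lhs g i k j l = (\<lambda>m n.
      wmul (whmul (XX g i k j l)) m n
    - whmul (XX g k i j l) m n
    + (if k = - i then wmul (\<lambda>m' n'. \<Sum>a\<in>idx. XX g a (-a) j l m' n') m n else 0))"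

(* entry ((i,k),(j,l)) of  T_2(v) T_1(u) w(w-1/2) R(w) *)
definition rtt_rhs :: "(int \<Rightarrow> int \<Rightarrow> nat \<Rightarrow> 'a::real_algebra_1) \<Rightarrow> int \<Rightarrow> int \<Rightarrow> int \<Rightarrow> int \<Rightarrow> int \<Rightarrow> int \<Rightarrow> 'a" where
  "rtt_rhs g i k j l = (\<lambda>m n.
      wmul (whmul (YY g i k j l)) m n
    - whmul (YY g i k l j) m n
    + (if l = - j then wmul (\<lambda>m' n'. \<Sum>a\<in>idx. YY g i k a (-a) m' n') m n else 0))"

definition yangian_rel :: "(int \<Rightarrow> int \<Rightarrow> nat \<Rightarrow> 'a::real_algebra_1) \<Rightarrow> bool" where
  "yangian_rel g \<longleftrightarrow>
     (\<forall>i\<in>idx. \<forall>k\<in>idx. \<forall>j\<in>idx. \<forall>l\<in>idx. rtt_lhs g i k j l = rtt_rhs g i k j l)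
   \<and> (\<forall>i\<in>idx. \<forall>j\<in>idx.
        (\<lambda>n. \<Sum>a\<in>idx. cmul (tser g i a) (shift_half (tser g (-j) (-a))) n)
          = (if i = j then one_ser else (\<lambda>_. 0)))
   \<and> (\<forall>i\<in>idx. \<forall>j\<in>idx.
        (\<lambda>n. \<Sum>a\<in>idx. cmul (shift_half (tser g (-a) (-i))) (tser g a j) n)
          = (if i = j then one_ser else (\<lambda>_. 0)))"

definition Fmat :: "(int \<Rightarrow> int \<Rightarrow> nat \<Rightarrow> 'a::ring_1) \<Rightarrow> int \<Rightarrow> int \<Rightarrow> nat \<Rightarrow> 'a" where
  "Fmat f i a = (if i = a then one_ser else if a < i then f i a else (\<lambda>_. 0))"

definition Emat :: "(int \<Rightarrow> int \<Rightarrow> nat \<Rightarrow> 'a::ring_1) \<Rightarrow> int \<Rightarrow> int \<Rightarrow> nat \<Rightarrow> 'a" where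
  "Emat e a j = (if a = j then one_ser else if a < j then e a j else (\<lambda>_. 0))"

(* T(u) = F(u) K(u) E(u), with k_a in 1 + u^{-1}A[[u^{-1}]], e_ij, f_ji in u^{-1}A[[u^{-1}]] *)
definition gauss_dec :: "(int \<Rightarrow> int \<Rightarrow> nat \<Rightarrow> 'a::real_algebra_1) \<Rightarrow> (int \<Rightarrow> nat \<Rightarrow> 'a)
     \<Rightarrow> (int \<Rightarrow> int \<Rightarrow> nat \<Rightarrow> 'a) \<Rightarrow> (int \<Rightarrow> int \<Rightarrow> nat \<Rightarrow> 'a) \<Rightarrow> bool" where
  "gauss_dec g k e f \<longleftrightarrow>
     (\<forall>a\<in>idx. k a 0 = 1)
   \<and> (\<forall>i\<in>idx. \<forall>j\<in>idx. i < j \<longrightarrow> e i j 0 = 0 \<and> f j i 0 = 0)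
   \<and> (\<forall>i\<in>idx. \<forall>j\<in>idx.
        tser g i j = (\<lambda>n. \<Sum>a\<in>idx. cmul (cmul (Fmat f i a) (k a)) (Emat e a j) n))"

end

theory Submission
  imports Defs "HOL-Computational_Algebra.Formal_Power_Series"
begin

text \<open>Since the first row of \<open>F(u)\<close> is \<open>(1,0,0)\<close>, the first row of \<open>T(u)\<close> is
  \<open>k(u) (1, e\<^sub>0(u), e\<^sub>1(u))\<close> with \<open>k = k\<^sub>-\<^sub>1\<close>, \<open>e\<^sub>j = e\<^sub>-\<^sub>1\<^sub>,\<^sub>j\<close>. Two instances of the
  RTT relation say that commutation with \<open>x = t\<^sup>(\<^sup>1\<^sup>)\<^sub>-\<^sub>1\<^sub>,\<^sub>0\<close> sends \<open>k\<close> to \<open>-k e\<^sub>0\<close> and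
  \<open>k e\<^sub>0\<close> to \<open>k e\<^sub>1\<close>. The Leibniz rule for \<open>[x, -]\<close> then gives
  \<open>k e\<^sub>1 = k ([x, e\<^sub>0] - e\<^sub>0\<^sup>2)\<close>, and \<open>k\<close> can be cancelled because its constant term is \<open>1\<close>;
  finally \<open>x = e\<^sup>(\<^sup>1\<^sup>)\<^sub>-\<^sub>1\<^sub>,\<^sub>0\<close> by comparing the \<open>u\<^sup>-\<^sup>1\<close> coefficients of \<open>t\<^sub>-\<^sub>1\<^sub>,\<^sub>0 = k e\<^sub>0\<close>.\<close>

unbundle fps_syntax

lemma tser_0 [simp]: "tser g i j 0 = (if i = j then 1 else 0)"
  by (simp add: tser_def)

lemma tser_1 [simp]: "tser g i j (Suc 0) = g i j 1"
  by (simp add: tser_def)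

lemma yangian_rel_rtt:
  assumes "yangian_rel g" "i \<in> idx" "k \<in> idx" "j \<in> idx" "l \<in> idx"
  shows "rtt_lhs g i k j l m n = rtt_rhs g i k j l m n"
  using assms unfolding yangian_rel_def by metis

text \<open>Both commutators are the coefficient of \<open>u\<^sup>1 v\<^sup>-\<^sup>n\<close> in the entry \<open>((-1,-1),(0,l))\<close>
  of the polynomial form of the RTT relation, with \<open>l = 0\<close> resp. \<open>l = -1\<close>.\<close>

lemma yangian_commutator_t_m1_0:
  fixes g :: "int \<Rightarrow> int \<Rightarrow> nat \<Rightarrow> 'a::real_algebra_1"
  assumes "yangian_rel g"
  shows "g (-1) 0 1 * tser g (-1) 0 n - tser g (-1) 0 n * g (-1) 0 1 = tser g (-1) 1 n"
proof -
  have "rtt_lhs g (-1) (-1) 0 0 1 (- int n) = rtt_rhs g (-1) (-1) 0 0 1 (- int n)"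
    using yangian_rel_rtt[OF assms] by (simp add: idx_def)
  then show ?thesis
    by (simp add: rtt_lhs_def rtt_rhs_def wmul_def whmul_def XX_def YY_def idx_def algebra_simps)
qed

lemma yangian_commutator_t_m1_m1:
  fixes g :: "int \<Rightarrow> int \<Rightarrow> nat \<Rightarrow> 'a::real_algebra_1"
  assumes "yangian_rel g"
  shows "g (-1) 0 1 * tser g (-1) (-1) n - tser g (-1) (-1) n * g (-1) 0 1 = - tser g (-1) 0 n"
proof -
  have "rtt_lhs g (-1) (-1) 0 (-1) 1 (- int n) = rtt_rhs g (-1) (-1) 0 (-1) 1 (- int n)"
    using yangian_rel_rtt[OF assms] by (simp add: idx_def)
  then show ?thesis
    by (simp add: rtt_lhs_def rtt_rhs_def wmul_def whmul_def XX_def YY_def idx_def algebra_simps)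
qed

lemma Abs_fps_cmul: "Abs_fps (cmul f h) = Abs_fps f * Abs_fps h"
  by (simp add: fps_eq_iff cmul_def fps_mult_nth atLeast0AtMost)

lemma Abs_fps_one_ser: "Abs_fps one_ser = (1 :: 'a::ring_1 fps)"
  by (simp add: fps_eq_iff one_ser_def)

lemma cmul_one_ser_left: "cmul one_ser h = h"
proof
  fix n
  have "cmul one_ser h n = (\<Sum>p\<le>n. if p = 0 then h (n - p) else 0)"
    unfolding cmul_def by (rule sum.cong) (auto simp: one_ser_def)
  then show "cmul one_ser h n = h n" by simp
qed

lemma cmul_zero_left: "cmul (\<lambda>_. 0) h = (\<lambda>_. 0)"
  by (simp add: cmul_def fun_eq_iff)

lemma gauss_dec_first_row:
  assumes "gauss_dec g k e f" "j \<in> idx"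
  shows "Abs_fps (tser g (-1) j) = Abs_fps (k (-1)) * Abs_fps (Emat e (-1) j)"
proof -
  have "tser g (-1) j = (\<lambda>n. \<Sum>a\<in>idx. cmul (cmul (Fmat f (-1) a) (k a)) (Emat e a j) n)"
    using assms unfolding gauss_dec_def by (auto simp: idx_def)
  also have "\<dots> = cmul (k (-1)) (Emat e (-1) j)"
    by (simp add: idx_def Fmat_def cmul_one_ser_left cmul_zero_left)
  finally show ?thesis
    by (simp add: Abs_fps_cmul)
qed

lemma fps_mult_left_cancel:
  fixes K A B :: "'a::ring_1 fps"
  assumes K_0: "K $ 0 = 1" and "K * A = K * B"
  shows "A = B"
proof -
  define D where "D = A - B"
  have KD: "K * D = 0"
    using assms(2) by (simp add: D_def right_diff_distrib)
  have "D $ n = 0" for n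
  proof (induction n rule: less_induct)
    case (less n)
    have tail: "(\<Sum>i=Suc 0..n. K$i * D$(n - i)) = 0"
      by (rule sum.neutral) (auto simp: less)
    have "0 = (K * D) $ n" using KD by simp
    also have "\<dots> = K$0 * D$n + (\<Sum>i=Suc 0..n. K$i * D$(n - i))"
      unfolding fps_mult_nth by (simp add: sum.atLeast_Suc_atMost)
    finally show ?case using tail K_0 by simp
  qed
  then show ?thesis by (simp add: fps_ext D_def)
qed

lemma commutator_product_rule:
  fixes x k a b :: "'a::ring"
  assumes "x * (k * a) - k * a * x = k * b"
    and "x * k - k * x = - (k * a)"
  shows "k * b = k * (x * a - a * x - a * a)"
proof -
  have "k * b = (x * k - k * x) * a + k * (x * a - a * x)"
    using assms(1) by (simp add: algebra_simps)
  then show ?thesis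
    using assms(2) by (simp add: algebra_simps)
qed

theorem lemma3p9:
  fixes g :: "int \<Rightarrow> int \<Rightarrow> nat \<Rightarrow> 'a::real_algebra_1"
    and k :: "int \<Rightarrow> nat \<Rightarrow> 'a"
    and e f :: "int \<Rightarrow> int \<Rightarrow> nat \<Rightarrow> 'a"
  assumes "yangian_rel g"
    and "gauss_dec g k e f"
  shows "e (-1) 1 = (\<lambda>n. e (-1) 0 1 * e (-1) 0 n - e (-1) 0 n * e (-1) 0 1
                          - cmul (e (-1) 0) (e (-1) 0) n)"
proof -
  define K E\<^sub>0 E\<^sub>1 where "K = Abs_fps (k (-1))"
    and "E\<^sub>0 = Abs_fps (e (-1) 0)" and "E\<^sub>1 = Abs_fps (e (-1) 1)"
  define X where "X = fps_const (g (-1) 0 1)"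
  have K_0: "K $ 0 = 1" and E\<^sub>0_0: "E\<^sub>0 $ 0 = 0"
    using assms(2) unfolding gauss_dec_def K_def E\<^sub>0_def by (auto simp: idx_def)
  have T: "Abs_fps (tser g (-1) (-1)) = K" "Abs_fps (tser g (-1) 0) = K * E\<^sub>0"
    "Abs_fps (tser g (-1) 1) = K * E\<^sub>1"
    using gauss_dec_first_row[OF assms(2)]
    by (simp_all add: idx_def Emat_def Abs_fps_one_ser K_def E\<^sub>0_def E\<^sub>1_def)
  have x: "g (-1) 0 1 = e (-1) 0 1"
    using arg_cong[OF T(2), of "\<lambda>F. F $ 1"] K_0 E\<^sub>0_0 by (simp add: fps_mult_nth E\<^sub>0_def)
  have "X * Abs_fps (tser g (-1) 0) - Abs_fps (tser g (-1) 0) * X = Abs_fps (tser g (-1) 1)"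
    "X * Abs_fps (tser g (-1) (-1)) - Abs_fps (tser g (-1) (-1)) * X = - Abs_fps (tser g (-1) 0)"
    using yangian_commutator_t_m1_0[OF assms(1)] yangian_commutator_t_m1_m1[OF assms(1)]
    by (simp_all add: fps_eq_iff X_def)
  then have "K * E\<^sub>1 = K * (X * E\<^sub>0 - E\<^sub>0 * X - E\<^sub>0 * E\<^sub>0)"
    unfolding T by (rule commutator_product_rule)
  then have "E\<^sub>1 = X * E\<^sub>0 - E\<^sub>0 * X - E\<^sub>0 * E\<^sub>0"
    by (rule fps_mult_left_cancel[OF K_0])
  then have "E\<^sub>1 $ n = (X * E\<^sub>0 - E\<^sub>0 * X - E\<^sub>0 * E\<^sub>0) $ n" for n
    by simp
  then show ?thesis
    unfolding X_def x by (simp add: E\<^sub>0_def E\<^sub>1_def fun_eq_iff flip: Abs_fps_cmul)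
qed

end
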